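(* Let $X$ be a finite simple graph and let $k=\alpha_q(X)$. Then $\alpha_q(X)>\alpha(X)$ if and only if every quantum $k$-coclique matrix $P=(P_{vi})$ for $X$ (in any dimension $d$) is Kochen–Specker, i.e. there is no choice of vertices $v_1,\dots,v_k\in V(X)$ such that $P_{v_i i}P_{v_j j}\neq 0$ for all $i\neq j$ in $[k]$.
   Context: All graphs are finite and simple; $\alpha(X)$ is the independence number of $X$. For a finite simple graph $X$ and positive integers $s,d$, a quantum $s$-coclique matrix (in dimension $d$) is a $|V(X)|\times s$ array $P=(P_{vi})_{v\in V(X),\, i\in[s]}$ of orthogonal projections $P_{vi}\in\mathbb{C}^{d\times d}$ such that (a) $\sum_{v\in V(X)}P_{vi}=I_d$ for every $i\in[s]$; (b) $P_{vi}P_{uj}=0$ for all $i\neq j$ in $[s]$ and all adjacent vertices $u\sim v$; (c) $P_{vi}P_{vj}=0$ for all $v\in V(X)$ and all $i\neq j$ in $[s]$. The quantum independence number $\alpha_q(X)$ is the largest $s$ such that a quantum $s$-coclique matrix for $X$ exists for some $d\ge 1$. (In the paper's terminology, the condition on $P$ says that the orthogonality graph of the entries of $P$, with the columns $\{P_{vi}:v\in V(X)\}$ as the cliques, is a projective Kochen–Specker graph: every transversal choosing one entry from each column contains two orthogonal entries, where projections $A,B$ are orthogonal iff $\operatorname{tr}(AB)=0$, equivalently $AB=0$.) *)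

theory Defs
  imports "Jordan_Normal_Form.Matrix" "HOL.Complex"
begin

definition simple_graph :: "'a set \<Rightarrow> ('a \<Rightarrow> 'a \<Rightarrow> bool) \<Rightarrow> bool" where
  "simple_graph V E \<longleftrightarrow> finite V \<and> (\<forall>u v. E u v \<longrightarrow> u \<in> V \<and> v \<in> V)
     \<and> (\<forall>u v. E u v \<longrightarrow> E v u) \<and> (\<forall>v. \<not> E v v)"

definition independent_set :: "'a set \<Rightarrow> ('a \<Rightarrow> 'a \<Rightarrow> bool) \<Rightarrow> 'a set \<Rightarrow> bool" where
  "independent_set V E S \<longleftrightarrow> S \<subseteq> V \<and> (\<forall>u\<in>S. \<forall>v\<in>S. \<not> E u v)"

definition indep_num :: "'a set \<Rightarrow> ('a \<Rightarrow> 'a \<Rightarrow> bool) \<Rightarrow> nat" where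
  "indep_num V E = Sup (card ` {S. independent_set V E S})"

definition orth_proj :: "nat \<Rightarrow> complex mat \<Rightarrow> bool" where
  "orth_proj d A \<longleftrightarrow> A \<in> carrier_mat d d \<and> A * A = A
     \<and> (\<forall>a<d. \<forall>b<d. A $$ (b, a) = cnj (A $$ (a, b)))"

definition quantum_coclique :: "'a set \<Rightarrow> ('a \<Rightarrow> 'a \<Rightarrow> bool) \<Rightarrow> nat \<Rightarrow> nat
     \<Rightarrow> ('a \<Rightarrow> nat \<Rightarrow> complex mat) \<Rightarrow> bool" where
  "quantum_coclique V E s d P \<longleftrightarrow>
     (\<forall>v\<in>V. \<forall>i<s. orth_proj d (P v i))
   \<and> (\<forall>i<s. \<forall>a<d. \<forall>b<d. (\<Sum>v\<in>V. P v i $$ (a, b)) = (1\<^sub>m d) $$ (a, b))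
   \<and> (\<forall>i<s. \<forall>j<s. i \<noteq> j \<longrightarrow> (\<forall>u\<in>V. \<forall>v\<in>V. E u v \<longrightarrow> P v i * P u j = 0\<^sub>m d d))
   \<and> (\<forall>v\<in>V. \<forall>i<s. \<forall>j<s. i \<noteq> j \<longrightarrow> P v i * P v j = 0\<^sub>m d d)"

(* quantum independence number: largest positive s admitting a quantum s-coclique matrix
   in some dimension d \<ge> 1 (Sup of a finite set of naturals = its maximum) *)
definition quantum_indep_num :: "'a set \<Rightarrow> ('a \<Rightarrow> 'a \<Rightarrow> bool) \<Rightarrow> nat" where
  "quantum_indep_num V E =
     Sup {s. s \<ge> 1 \<and> (\<exists>d\<ge>1. \<exists>P. quantum_coclique V E s d P)}"

definition kochen_specker :: "'a set \<Rightarrow> nat \<Rightarrow> nat \<Rightarrow> ('a \<Rightarrow> nat \<Rightarrow> complex mat) \<Rightarrow> bool" where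
  "kochen_specker V k d P \<longleftrightarrow>
     \<not> (\<exists>f. (\<forall>i<k. f i \<in> V) \<and>
            (\<forall>i<k. \<forall>j<k. i \<noteq> j \<longrightarrow> P (f i) i * P (f j) j \<noteq> 0\<^sub>m d d))"

end

theory Submission
  imports Defs
begin

text \<open>A transversal \<open>v\<^sub>0, \<dots>, v\<^sub>k\<^sub>-\<^sub>1\<close> of a quantum coclique matrix with pairwise
  non-orthogonal entries consists of distinct, pairwise non-adjacent vertices, since
  equal or adjacent vertices in different columns give orthogonal entries. Conversely, an
  independent set of size \<open>k\<close> yields the classical \<open>1\<times>1\<close> coclique matrix placing \<open>1\<close> at
  \<open>P\<^bsub>v\<^sub>i i\<^esub>\<close>, which is not Kochen--Specker. Hence a non-Kochen--Specker quantum
  \<open>k\<close>-coclique matrix exists iff \<open>k \<le> \<alpha>(X)\<close>, which for \<open>k = \<alpha>\<^sub>q(X)\<close> is the theorem.\<close>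

lemma finite_cards_independent_sets:
  assumes "simple_graph V E"
  shows "finite (card ` {S. independent_set V E S})"
proof -
  have "{S. independent_set V E S} \<subseteq> Pow V" by (auto simp: independent_set_def)
  moreover have "finite V" using assms by (simp add: simple_graph_def)
  ultimately show ?thesis by (meson finite_Pow_iff finite_imageI finite_subset)
qed

lemma card_le_indep_num:
  assumes "simple_graph V E" "independent_set V E S"
  shows "card S \<le> indep_num V E"
  unfolding indep_num_def using assms finite_cards_independent_sets[OF assms(1)]
  by (intro cSup_upper) (auto intro: bdd_above_finite)

lemma indep_num_attained:
  assumes "simple_graph V E"
  obtains S where "independent_set V E S" "card S = indep_num V E"
proof -
  have "independent_set V E {}" by (simp add: independent_set_def)
  then have ne: "card ` {S. independent_set V E S} \<noteq> {}" by blast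
  have "indep_num V E \<in> card ` {S. independent_set V E S}"
    unfolding indep_num_def Sup_nat_def
    using finite_cards_independent_sets[OF assms] ne by (simp add: Max_in ne)
  then show ?thesis using that by (auto simp: image_iff)
qed

lemma independent_set_subset:
  "independent_set V E S \<Longrightarrow> T \<subseteq> S \<Longrightarrow> independent_set V E T"
  by (auto simp: independent_set_def)

lemma ex_independent_set_card_iff:
  assumes "simple_graph V E"
  shows "(\<exists>S. independent_set V E S \<and> card S = s) \<longleftrightarrow> s \<le> indep_num V E"
proof
  assume "\<exists>S. independent_set V E S \<and> card S = s"
  then show "s \<le> indep_num V E" using card_le_indep_num[OF assms] by blast
next
  assume le: "s \<le> indep_num V E"
  obtain S where S: "independent_set V E S" "card S = indep_num V E"
    using indep_num_attained[OF assms] .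
  obtain T where "T \<subseteq> S" "card T = s"
    using obtain_subset_with_card_n[of s S] le S(2) by metis
  then show "\<exists>S. independent_set V E S \<and> card S = s"
    using independent_set_subset[OF S(1)] by blast
qed

lemma independent_set_of_transversal:
  assumes "simple_graph V E" and q: "quantum_coclique V E s d P"
    and fV: "\<forall>i<s. f i \<in> V"
    and nz: "\<forall>i<s. \<forall>j<s. i \<noteq> j \<longrightarrow> P (f i) i * P (f j) j \<noteq> 0\<^sub>m d d"
  shows "independent_set V E (f ` {..<s})" and "card (f ` {..<s}) = s"
proof -
  have adj: "P v i * P u j = 0\<^sub>m d d"
    if "i < s" "j < s" "i \<noteq> j" "u \<in> V" "v \<in> V" "E u v" for i j u v
    using q that unfolding quantum_coclique_def by blast
  have same: "P v i * P v j = 0\<^sub>m d d" if "i < s" "j < s" "i \<noteq> j" "v \<in> V" for i j v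
    using q that unfolding quantum_coclique_def by blast
  show "independent_set V E (f ` {..<s})"
    unfolding independent_set_def
  proof (intro conjI ballI notI)
    show "f ` {..<s} \<subseteq> V" using fV by auto
  next
    fix u v assume "u \<in> f ` {..<s}" "v \<in> f ` {..<s}" and e: "E u v"
    then obtain i j where ij: "i < s" "j < s" "u = f i" "v = f j" by auto
    have "E v u" using e assms(1) unfolding simple_graph_def by blast
    moreover have "i \<noteq> j" using e ij assms(1) unfolding simple_graph_def by blast
    ultimately have "P (f i) i * P (f j) j = 0\<^sub>m d d"
      using adj[of i j v u] ij fV by simp
    then show False using nz ij \<open>i \<noteq> j\<close> by blast
  qed
  have "inj_on f {..<s}"
  proof (rule inj_onI, rule ccontr)
    fix i j assume "i \<in> {..<s}" "j \<in> {..<s}" "f i = f j" "i \<noteq> j"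
    then show False using same[of i j "f i"] nz fV by auto
  qed
  then show "card (f ` {..<s}) = s" by (simp add: card_image)
qed

definition classical_coclique :: "nat \<Rightarrow> (nat \<Rightarrow> 'a) \<Rightarrow> 'a \<Rightarrow> nat \<Rightarrow> complex mat" where
  "classical_coclique s f v i = (if i < s \<and> v = f i then 1\<^sub>m 1 else 0\<^sub>m 1 1)"

lemma one_mat_1_neq_zero: "(1\<^sub>m 1 :: complex mat) \<noteq> 0\<^sub>m 1 1"
proof
  assume "(1\<^sub>m 1 :: complex mat) = 0\<^sub>m 1 1"
  then have "(1\<^sub>m 1 :: complex mat) $$ (0, 0) = 0\<^sub>m 1 1 $$ (0, 0)" by simp
  then show False by simp
qed

lemma quantum_coclique_classical_coclique:
  assumes "simple_graph V E" and "independent_set V E (f ` {..<s})" and "inj_on f {..<s}"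
  shows "quantum_coclique V E s 1 (classical_coclique s f)"
  unfolding quantum_coclique_def
proof (intro conjI ballI allI impI)
  have fV: "f i \<in> V" if "i < s" for i
    using assms(2) that unfolding independent_set_def by auto
  fix i assume i: "i < s"
  show "orth_proj 1 (classical_coclique s f v i)" for v
    by (auto simp: classical_coclique_def orth_proj_def)
  fix a b :: nat assume "a < 1" "b < 1"
  then have "(\<Sum>v\<in>V. classical_coclique s f v i $$ (a, b)) = (\<Sum>v\<in>V. if v = f i then 1 else 0)"
    using i by (intro sum.cong) (auto simp: classical_coclique_def)
  also have "\<dots> = 1" using fV[OF i] assms(1) by (simp add: simple_graph_def)
  finally show "(\<Sum>v\<in>V. classical_coclique s f v i $$ (a, b)) = 1\<^sub>m 1 $$ (a, b)"
    using \<open>a < 1\<close> \<open>b < 1\<close> by simp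
next
  fix i j u v assume "i < s" "j < s" "i \<noteq> j" "E u v"
  moreover have "\<not> E (f j) (f i)"
    using assms(2) \<open>i < s\<close> \<open>j < s\<close> unfolding independent_set_def by auto
  ultimately show "classical_coclique s f v i * classical_coclique s f u j = 0\<^sub>m 1 1"
    by (auto simp: classical_coclique_def)
next
  fix i j v assume "i < s" "j < s" "i \<noteq> j"
  then have "f i \<noteq> f j" using assms(3) by (auto dest: inj_onD)
  then show "classical_coclique s f v i * classical_coclique s f v j = 0\<^sub>m 1 1"
    by (auto simp: classical_coclique_def)
qed

lemma not_kochen_specker_classical_coclique:
  assumes "\<forall>i<s. f i \<in> V"
  shows "\<not> kochen_specker V s 1 (classical_coclique s f)"
proof -
  have "classical_coclique s f (f i) i * classical_coclique s f (f j) j \<noteq> 0\<^sub>m 1 1"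
    if "i < s" "j < s" for i j
    using that one_mat_1_neq_zero by (simp add: classical_coclique_def)
  then show ?thesis unfolding kochen_specker_def using assms by blast
qed

theorem ex_not_kochen_specker_iff_le_indep_num:
  assumes "simple_graph V E"
  shows "(\<exists>d\<ge>1. \<exists>P. quantum_coclique V E s d P \<and> \<not> kochen_specker V s d P)
    \<longleftrightarrow> s \<le> indep_num V E"
proof
  assume "\<exists>d\<ge>1. \<exists>P. quantum_coclique V E s d P \<and> \<not> kochen_specker V s d P"
  then obtain d P f where "quantum_coclique V E s d P" "\<forall>i<s. f i \<in> V"
      "\<forall>i<s. \<forall>j<s. i \<noteq> j \<longrightarrow> P (f i) i * P (f j) j \<noteq> 0\<^sub>m d d"
    unfolding kochen_specker_def by blast
  from independent_set_of_transversal[OF assms this]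
  show "s \<le> indep_num V E" by (metis card_le_indep_num[OF assms])
next
  assume "s \<le> indep_num V E"
  then obtain S where S: "independent_set V E S" "card S = s"
    using ex_independent_set_card_iff[OF assms] by blast
  have "finite S"
    using S(1) assms finite_subset unfolding independent_set_def simple_graph_def by blast
  then obtain f where "bij_betw f {..<s} S"
    using ex_bij_betw_nat_finite[of S] S(2) by (metis atLeast0LessThan)
  then have "f ` {..<s} = S" "inj_on f {..<s}" "\<forall>i<s. f i \<in> V"
    using S(1) unfolding bij_betw_def independent_set_def by auto
  then have "quantum_coclique V E s 1 (classical_coclique s f)"
    and "\<not> kochen_specker V s 1 (classical_coclique s f)"
    using quantum_coclique_classical_coclique[OF assms] S(1)
      not_kochen_specker_classical_coclique by simp_all
  then show "\<exists>d\<ge>1. \<exists>P. quantum_coclique V E s d P \<and> \<not> kochen_specker V s d P"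
    by blast
qed

theorem mainTheorem4:
  fixes V :: "'a set" and E :: "'a \<Rightarrow> 'a \<Rightarrow> bool"
  assumes "simple_graph V E" and "V \<noteq> {}"
  shows "quantum_indep_num V E > indep_num V E \<longleftrightarrow>
    (\<forall>d\<ge>1. \<forall>P. quantum_coclique V E (quantum_indep_num V E) d P
        \<longrightarrow> kochen_specker V (quantum_indep_num V E) d P)"
  unfolding not_le[symmetric] ex_not_kochen_specker_iff_le_indep_num[OF assms(1), symmetric]
  by blast

end
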